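(* Let $p\colon X\to B$ be a Boolean set. If $G$ is a proper filter in $(X,\le)$ then $p(G)$ is a proper filter in $B$.
   Context: Convention: a "Boolean algebra" means a generalized Boolean algebra (relatively complemented distributive lattice with $0$). Presheaf of sets over a meet semilattice $E$: pairwise disjoint sets $X_e$, restriction maps $x\mapsto x|^e_f$ for $e\ge f$ with $|^e_e=\mathrm{id}$ and $(x|^e_f)|^f_g=x|^e_g$; $p(x)=e$ iff $x\in X_e$; global support: all $X_e\neq\emptyset$. Order: $x\le y$ iff $p(x)\le p(y)$ and $x=y|^{p(y)}_{p(x)}$. Compatibility $x\sim y$: $x\wedge y$ exists and $p(x\wedge y)=p(x)\wedge p(y)$. A Boolean set is a presheaf $p\colon X\to B$ with global support over a Boolean algebra $B$ such that $(X,\le)$ has least element $0$, compatible pairs have joins, and $p(x)=0\Rightarrow x=0$. In a poset, a filter is a non-empty subset $F$ that is down directed ($a,b\in F$ implies some $c\in F$ with $c\le a,b$) and upwardly closed; it is proper if it is not the whole poset. *)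

theory Defs
  imports Main
begin

class gen_boolean_algebra = distrib_lattice + order_bot +
  assumes rel_compl: "a \<le> b \<Longrightarrow> \<exists>c. inf a c = bot \<and> sup a c = b"

text \<open>The elements are the carrier X; the sets X_e are
the fibres of p (hence pairwise disjoint); res x f stands for x|^{p x}_f, for f \<le> p x.\<close>
definition presheaf :: "'x set \<Rightarrow> ('x \<Rightarrow> 'b::semilattice_inf) \<Rightarrow> ('x \<Rightarrow> 'b \<Rightarrow> 'x) \<Rightarrow> bool" where
  "presheaf X p res \<longleftrightarrow>
     (\<forall>x\<in>X. \<forall>f. f \<le> p x \<longrightarrow> res x f \<in> X \<and> p (res x f) = f) \<and>
     (\<forall>x\<in>X. res x (p x) = x) \<and>
     (\<forall>x\<in>X. \<forall>f g. g \<le> f \<and> f \<le> p x \<longrightarrow> res (res x f) g = res x g)"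

definition global_support :: "'x set \<Rightarrow> ('x \<Rightarrow> 'b) \<Rightarrow> bool" where
  "global_support X p \<longleftrightarrow> (\<forall>e. \<exists>x\<in>X. p x = e)"

definition psle :: "('x \<Rightarrow> 'b::order) \<Rightarrow> ('x \<Rightarrow> 'b \<Rightarrow> 'x) \<Rightarrow> 'x \<Rightarrow> 'x \<Rightarrow> bool" where
  "psle p res x y \<longleftrightarrow> p x \<le> p y \<and> x = res y (p x)"

definition is_meet :: "'a set \<Rightarrow> ('a \<Rightarrow> 'a \<Rightarrow> bool) \<Rightarrow> 'a \<Rightarrow> 'a \<Rightarrow> 'a \<Rightarrow> bool" where
  "is_meet A le x y m \<longleftrightarrow> m \<in> A \<and> le m x \<and> le m y \<and>
     (\<forall>z\<in>A. le z x \<and> le z y \<longrightarrow> le z m)"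

definition is_join :: "'a set \<Rightarrow> ('a \<Rightarrow> 'a \<Rightarrow> bool) \<Rightarrow> 'a \<Rightarrow> 'a \<Rightarrow> 'a \<Rightarrow> bool" where
  "is_join A le x y j \<longleftrightarrow> j \<in> A \<and> le x j \<and> le y j \<and>
     (\<forall>z\<in>A. le x z \<and> le y z \<longrightarrow> le j z)"

definition compatible :: "'x set \<Rightarrow> ('x \<Rightarrow> 'b::semilattice_inf) \<Rightarrow> ('x \<Rightarrow> 'b \<Rightarrow> 'x) \<Rightarrow> 'x \<Rightarrow> 'x \<Rightarrow> bool" where
  "compatible X p res x y \<longleftrightarrow>
     (\<exists>m. is_meet X (psle p res) x y m \<and> p m = inf (p x) (p y))"

definition boolean_set :: "'x set \<Rightarrow> ('x \<Rightarrow> 'b::gen_boolean_algebra) \<Rightarrow> ('x \<Rightarrow> 'b \<Rightarrow> 'x) \<Rightarrow> bool" where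
  "boolean_set X p res \<longleftrightarrow>
     presheaf X p res \<and> global_support X p \<and>
     (\<exists>z\<in>X. (\<forall>x\<in>X. psle p res z x) \<and> (\<forall>x\<in>X. p x = bot \<longrightarrow> x = z)) \<and>
     (\<forall>x\<in>X. \<forall>y\<in>X. compatible X p res x y \<longrightarrow> (\<exists>j. is_join X (psle p res) x y j))"

definition is_filter :: "'a set \<Rightarrow> ('a \<Rightarrow> 'a \<Rightarrow> bool) \<Rightarrow> 'a set \<Rightarrow> bool" where
  "is_filter A le F \<longleftrightarrow> F \<subseteq> A \<and> F \<noteq> {} \<and>
     (\<forall>a\<in>F. \<forall>b\<in>F. \<exists>c\<in>F. le c a \<and> le c b) \<and>
     (\<forall>a\<in>F. \<forall>b\<in>A. le a b \<longrightarrow> b \<in> F)"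

definition is_proper_filter :: "'a set \<Rightarrow> ('a \<Rightarrow> 'a \<Rightarrow> bool) \<Rightarrow> 'a set \<Rightarrow> bool" where
  "is_proper_filter A le F \<longleftrightarrow> is_filter A le F \<and> F \<noteq> A"

end

theory Submission
  imports Defs
begin

text \<open>The projection p is monotone, so it maps directed sets to directed sets. Upward closure
of p(G) comes from extending an element x to any support b \<ge> p x: pick c with p x \<sqinter> c = 0 and
p x \<squnion> c = b and some w over c; then x and w are compatible (their meet is the least element 0),
so they have a join, which lies over p x \<squnion> c = b and above x. Finally p(G) misses 0 since
the only element over 0 is the least element of X, which lies in no proper filter.\<close>

lemma psle_proj_mono: "psle p res x y \<Longrightarrow> p x \<le> p y"
  unfolding psle_def by simp

lemma presheaf_psle_res:
  assumes "presheaf X p res" "j \<in> X" "psle p res x j" "p x \<le> f" "f \<le> p j"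
  shows "psle p res x (res j f)"
  using assms unfolding presheaf_def psle_def by auto

text \<open>Restricting a join to p x \<squnion> p y gives another upper bound, so the join cannot lie over more.\<close>
lemma presheaf_join_proj:
  fixes p :: "'x \<Rightarrow> 'b::lattice"
  assumes ps: "presheaf X p res" and j: "is_join X (psle p res) x y j"
  shows "p j = sup (p x) (p y)"
proof (rule antisym)
  have jX: "j \<in> X" and xj: "psle p res x j" and yj: "psle p res y j"
    and least: "\<And>u. u \<in> X \<Longrightarrow> psle p res x u \<Longrightarrow> psle p res y u \<Longrightarrow> psle p res j u"
    using j unfolding is_join_def by auto
  show sup_le: "sup (p x) (p y) \<le> p j"
    using xj yj psle_proj_mono by (metis sup_least)
  define u where "u = res j (sup (p x) (p y))"
  have "u \<in> X" and pu: "p u = sup (p x) (p y)"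
    using ps jX sup_le unfolding presheaf_def u_def by auto
  moreover have "psle p res x u" "psle p res y u"
    using presheaf_psle_res[OF ps jX] xj yj sup_le unfolding u_def by auto
  ultimately have "psle p res j u" using least by blast
  then show "p j \<le> sup (p x) (p y)" using pu psle_proj_mono by metis
qed

lemma boolean_set_least:
  assumes "boolean_set X p res"
  obtains z where "z \<in> X" "\<And>x. x \<in> X \<Longrightarrow> psle p res z x"
    "\<And>x. x \<in> X \<Longrightarrow> p x = bot \<longleftrightarrow> x = z"
proof -
  obtain z where zX: "z \<in> X" and zle: "\<forall>x\<in>X. psle p res z x"
    and zbot: "\<forall>x\<in>X. p x = bot \<longrightarrow> x = z"
    using assms unfolding boolean_set_def by auto
  obtain x0 where "x0 \<in> X" "p x0 = bot"
    using assms unfolding boolean_set_def global_support_def by blast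
  then have "p z = bot" using zle by (metis bot.extremum_uniqueI psle_proj_mono)
  with that zX zle zbot show thesis by blast
qed

lemma boolean_set_disjoint_join:
  assumes bs: "boolean_set X p res" and "x \<in> X" "y \<in> X" and disj: "inf (p x) (p y) = bot"
  obtains j where "is_join X (psle p res) x y j"
proof -
  obtain z where zX: "z \<in> X" and zle: "\<And>v. v \<in> X \<Longrightarrow> psle p res z v"
    and zbot: "\<And>v. v \<in> X \<Longrightarrow> p v = bot \<longleftrightarrow> v = z"
    using boolean_set_least[OF bs] by metis
  have "is_meet X (psle p res) x y z"
    unfolding is_meet_def
  proof (intro conjI ballI impI)
    fix v assume "v \<in> X" and "psle p res v x \<and> psle p res v y"
    then have "p v = bot"
      using disj by (metis le_inf_iff bot.extremum_uniqueI psle_proj_mono)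
    then show "psle p res v z" using zbot[OF \<open>v \<in> X\<close>] zle[OF zX] by simp
  qed (use zX zle \<open>x \<in> X\<close> \<open>y \<in> X\<close> in simp_all)
  then have "compatible X p res x y"
    unfolding compatible_def using zbot[OF zX] disj by auto
  moreover have "\<forall>x\<in>X. \<forall>y\<in>X. compatible X p res x y \<longrightarrow> (\<exists>j. is_join X (psle p res) x y j)"
    using bs unfolding boolean_set_def by blast
  ultimately show thesis using that assms(2,3) by blast
qed

lemma boolean_set_extend:
  assumes bs: "boolean_set X p res" and xX: "x \<in> X" and "p x \<le> b"
  obtains y where "y \<in> X" "psle p res x y" "p y = b"
proof -
  obtain c where disj: "inf (p x) c = bot" and cover: "sup (p x) c = b"
    using rel_compl[OF \<open>p x \<le> b\<close>] by blast
  obtain w where wX: "w \<in> X" and pw: "p w = c"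
    using bs unfolding boolean_set_def global_support_def by blast
  obtain j where j: "is_join X (psle p res) x w j"
    using boolean_set_disjoint_join[OF bs xX wX] disj pw by blast
  have "presheaf X p res" using bs unfolding boolean_set_def by blast
  then have "p j = b" using presheaf_join_proj j cover pw by metis
  with j that show thesis unfolding is_join_def by blast
qed

lemma boolean_set_proper_filter_avoids_bot:
  assumes bs: "boolean_set X p res" and G: "is_proper_filter X (psle p res) G"
  shows "bot \<notin> p ` G"
proof
  assume "bot \<in> p ` G"
  obtain z where "z \<in> X" and zle: "\<And>x. x \<in> X \<Longrightarrow> psle p res z x"
    and zbot: "\<And>x. x \<in> X \<Longrightarrow> p x = bot \<longleftrightarrow> x = z"
    using boolean_set_least[OF bs] by metis
  have GX: "G \<subseteq> X" and up: "\<And>a b. a \<in> G \<Longrightarrow> b \<in> X \<Longrightarrow> psle p res a b \<Longrightarrow> b \<in> G"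
    and "G \<noteq> X"
    using G unfolding is_proper_filter_def is_filter_def by auto
  from \<open>bot \<in> p ` G\<close> obtain g where "g \<in> G" "p g = bot" by (metis imageE)
  moreover from this GX have "g = z" using zbot by blast
  ultimately have "z \<in> G" by simp
  with up zle have "X \<subseteq> G" by (meson subsetI)
  with GX \<open>G \<noteq> X\<close> show False by blast
qed

theorem lemma3p3:
  fixes X :: "'x set" and p :: "'x \<Rightarrow> 'b::gen_boolean_algebra" and res :: "'x \<Rightarrow> 'b \<Rightarrow> 'x"
  assumes "boolean_set X p res"
    and "is_proper_filter X (psle p res) G"
  shows "is_proper_filter (UNIV :: 'b set) (\<le>) (p ` G)"
proof -
  have GX: "G \<subseteq> X" and "G \<noteq> {}"
    and dir: "\<forall>a\<in>G. \<forall>b\<in>G. \<exists>c\<in>G. psle p res c a \<and> psle p res c b"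
    and up: "\<forall>a\<in>G. \<forall>b\<in>X. psle p res a b \<longrightarrow> b \<in> G"
    using assms(2) unfolding is_proper_filter_def is_filter_def by auto
  have "\<forall>a\<in>p ` G. \<forall>b\<in>p ` G. \<exists>c\<in>p ` G. c \<le> a \<and> c \<le> b"
    using dir by (fastforce dest: psle_proj_mono)
  moreover have "b \<in> p ` G" if xG: "x \<in> G" and "p x \<le> b" for x b
  proof -
    obtain y where "y \<in> X" "psle p res x y" "p y = b"
      using boolean_set_extend[OF assms(1)] xG GX \<open>p x \<le> b\<close> by blast
    with up xG show ?thesis by blast
  qed
  moreover have "bot \<notin> p ` G"
    using boolean_set_proper_filter_avoids_bot[OF assms] .
  ultimately show ?thesis
    unfolding is_proper_filter_def is_filter_def using \<open>G \<noteq> {}\<close> by blast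
qed

end
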